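(* Let $N$ be a sub-sound pWF net, $M$ a sub-sound tWF net whose node set is disjoint from that of $N$, and $t^*$ a transition of $N$. Then the pWF net $N\otimes_{t^*}M$ is sub-sound.
   Context: Petri nets and markings. A Petri net is a triple $(P,T,F)$ with $P$ a finite set of places, $T$ a finite set of transitions, $P\cap T=\emptyset$, and $F\subseteq (P\times T)\cup(T\times P)$. For a node $x$, $\bullet x=\{y\mid (y,x)\in F\}$, $x\bullet=\{y\mid (x,y)\in F\}$. A marking is a multiset over $P$ (a function $P\to\mathbb N$); sets of places are identified with bags of multiplicity one, $+,-,\le$ are pointwise, and $k.m$ is the sum of $k$ copies of $m$. Transition $t$ is enabled at $m$ iff $\bullet t\le m$, firing gives $m-\bullet t+t\bullet$, and $m\xrightarrow{*}m'$ denotes reachability by a finite (possibly empty) firing sequence. Workflow nets. A pWF net is $(P,T,F,I,O)$ with $(P,T,F)$ a Petri net, $I,O\subseteq P$ non-empty, every node reachable by a directed path from some node of $I$, and some node of $O$ reachable from every node. A tWF net is the same with $I,O$ non-empty subsets of $T$. Input nodes may have incoming edges and output nodes outgoing edges. The place-completion $\mathrm{pc}(N)$ of a tWF net $N=(P,T,F,I,O)$ is obtained by adding two fresh places $p_i,p_o$ with edges $(p_i,t)$ for all $t\in I$ and $(t,p_o)$ for all $t\in O$, and taking input set $\{p_i\}$ and output set $\{p_o\}$. Sub-soundness. A pWF net is sub-sound if for all integers $k\ge k'\ge 0$ and every marking $m'$: if $k.I\xrightarrow{*}m'+k'.O$ then $m'\xrightarrow{*}(k-k').O$. A tWF net is sub-sound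 iff its place-completion is. Transition substitution. For a WF net $N=(P,T,F,I,O)$ and a tWF net $M=(P',T',F',I',O')$ with disjoint node sets and $t\in T$, $N\otimes_t M$ is obtained from $N$ by deleting $t$ and all edges incident to $t$, adding all nodes and edges of $M$, adding an edge $(q,t')$ for each $q\in\bullet_N t$ and $t'\in I'$, and an edge $(t',q)$ for each $t'\in O'$ and $q\in t\bullet_N$; its input set is $(I\setminus\{t\})\cup I'$ if $t\in I$ and $I$ otherwise, and its output set is $(O\setminus\{t\})\cup O'$ if $t\in O$ and $O$ otherwise. *)

theory Defs
  imports Main "HOL-Library.Multiset"
begin

record 'a wfnet =
  places :: "'a set"
  trans  :: "'a set"
  flow   :: "('a \<times> 'a) set"
  inp    :: "'a set"
  out    :: "'a set"

definition nodes :: "('a, 'b) wfnet_scheme \<Rightarrow> 'a set" where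
  "nodes N = places N \<union> trans N"

definition petri_net :: "('a, 'b) wfnet_scheme \<Rightarrow> bool" where
  "petri_net N \<longleftrightarrow> finite (places N) \<and> finite (trans N) \<and>
     places N \<inter> trans N = {} \<and>
     flow N \<subseteq> (places N \<times> trans N) \<union> (trans N \<times> places N)"

definition wf_paths :: "('a, 'b) wfnet_scheme \<Rightarrow> bool" where
  "wf_paths N \<longleftrightarrow> inp N \<noteq> {} \<and> out N \<noteq> {} \<and>
     (\<forall>x\<in>nodes N. \<exists>i\<in>inp N. (i, x) \<in> (flow N)\<^sup>*) \<and>
     (\<forall>x\<in>nodes N. \<exists>y\<in>out N. (x, y) \<in> (flow N)\<^sup>*)"

definition pWF :: "('a, 'b) wfnet_scheme \<Rightarrow> bool" where
  "pWF N \<longleftrightarrow> petri_net N \<and> inp N \<subseteq> places N \<and> out N \<subseteq> places N \<and> wf_paths N"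

definition tWF :: "('a, 'b) wfnet_scheme \<Rightarrow> bool" where
  "tWF N \<longleftrightarrow> petri_net N \<and> inp N \<subseteq> trans N \<and> out N \<subseteq> trans N \<and> wf_paths N"

definition preset :: "('a, 'b) wfnet_scheme \<Rightarrow> 'a \<Rightarrow> 'a multiset" where
  "preset N x = mset_set {y. (y, x) \<in> flow N}"

definition postset :: "('a, 'b) wfnet_scheme \<Rightarrow> 'a \<Rightarrow> 'a multiset" where
  "postset N x = mset_set {y. (x, y) \<in> flow N}"

definition fire_step :: "('a, 'b) wfnet_scheme \<Rightarrow> 'a multiset \<Rightarrow> 'a multiset \<Rightarrow> bool" where
  "fire_step N m m' \<longleftrightarrow> (\<exists>t\<in>trans N. preset N t \<subseteq># m \<and> m' = m - preset N t + postset N t)"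

definition reach :: "('a, 'b) wfnet_scheme \<Rightarrow> 'a multiset \<Rightarrow> 'a multiset \<Rightarrow> bool" where
  "reach N = (fire_step N)\<^sup>*\<^sup>*"

text \<open>Sub-soundness of a pWF net (sets identified with multiplicity-one bags).\<close>
definition sub_sound :: "('a, 'b) wfnet_scheme \<Rightarrow> bool" where
  "sub_sound N \<longleftrightarrow>
    (\<forall>k k' :: nat. \<forall>m'. k' \<le> k \<longrightarrow> set_mset m' \<subseteq> places N \<longrightarrow>
       reach N (repeat_mset k (mset_set (inp N))) (m' + repeat_mset k' (mset_set (out N))) \<longrightarrow>
       reach N m' (repeat_mset (k - k') (mset_set (out N))))"

text \<open>Place completion: fresh places are Inr False (p_i) and Inr True (p_o).\<close>
definition place_completion :: "'a wfnet \<Rightarrow> ('a + bool) wfnet" where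
  "place_completion N =
    \<lparr> places = Inl ` places N \<union> {Inr False, Inr True},
      trans = Inl ` trans N,
      flow = map_prod Inl Inl ` flow N
             \<union> {(Inr False, Inl t) | t. t \<in> inp N}
             \<union> {(Inl t, Inr True) | t. t \<in> out N},
      inp = {Inr False},
      out = {Inr True} \<rparr>"

definition tWF_sub_sound :: "'a wfnet \<Rightarrow> bool" where
  "tWF_sub_sound N \<longleftrightarrow> sub_sound (place_completion N)"

definition subst_trans :: "'a wfnet \<Rightarrow> 'a \<Rightarrow> 'a wfnet \<Rightarrow> 'a wfnet" where
  "subst_trans N t M =
    \<lparr> places = places N \<union> places M,
      trans = (trans N - {t}) \<union> trans M,
      flow = {e \<in> flow N. fst e \<noteq> t \<and> snd e \<noteq> t} \<union> flow M
             \<union> {(q, t') | q t'. (q, t) \<in> flow N \<and> t' \<in> inp M}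
             \<union> {(t', q) | t' q. t' \<in> out M \<and> (t, q) \<in> flow N},
      inp = (if t \<in> inp N then (inp N - {t}) \<union> inp M else inp N),
      out = (if t \<in> out N then (out N - {t}) \<union> out M else out N) \<rparr>"

end

theory Submission
  imports Defs
begin

text \<open>A run of N \<otimes>_t M splits into a run of N, in which t fires whenever an input
  transition of M fires, and a run of the place completion of M, whose places p_i and p_o
  count the started and the finished instances of M. Conversely, sub-soundness of M lets p_i
  reach p_o, so each firing of t can be replayed inside the copy of M and every run of N
  lifts to N \<otimes>_t M. To empty a marking reached together with k' copies of O, sub-soundness
  of M first finishes the d pending instances of M, leaving d copies of t\<bullet>; the resulting
  marking of N is then finished by sub-soundness of N.\<close>

lemma reach_refl [simp]: "reach N m m"
  by (simp add: reach_def)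

lemma reach_trans [trans]: "reach N x y \<Longrightarrow> reach N y z \<Longrightarrow> reach N x z"
  unfolding reach_def by (rule rtranclp_trans)

lemma reach_fire:
  assumes "u \<in> trans N" "preset N u \<subseteq># m"
  shows "reach N m (m - preset N u + postset N u)"
  using assms unfolding reach_def fire_step_def by blast

lemma reach_fire_repeat:
  assumes "u \<in> trans N" "repeat_mset k (preset N u) \<subseteq># m"
  shows "reach N m (m - repeat_mset k (preset N u) + repeat_mset k (postset N u))"
  using assms(2)
proof (induction k)
  case (Suc k)
  let ?m = "m - repeat_mset k (preset N u) + repeat_mset k (postset N u)"
  have c: "count (preset N u) a + k * count (preset N u) a \<le> count m a" for a
    using mset_subset_eq_count[OF Suc.prems] by simp
  have "repeat_mset k (preset N u) \<subseteq># m" "preset N u \<subseteq># ?m"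
    unfolding subseteq_mset_def
  proof (rule_tac [!] allI)
    fix a
    show "count (repeat_mset k (preset N u)) a \<le> count m a"
      "count (preset N u) a \<le> count ?m a"
      using c[of a] by simp_all
  qed
  then have "reach N m (?m - preset N u + postset N u)"
    using Suc.IH reach_fire[OF assms(1)] reach_trans by blast
  also have "?m - preset N u + postset N u =
      m - repeat_mset (Suc k) (preset N u) + repeat_mset (Suc k) (postset N u)"
  proof (rule multiset_eqI)
    fix a
    show "count (?m - preset N u + postset N u) a =
        count (m - repeat_mset (Suc k) (preset N u) + repeat_mset (Suc k) (postset N u)) a"
      using c[of a] by simp
  qed
  finally show ?case .
qed simp

lemma fire_step_add: "fire_step N x y \<Longrightarrow> fire_step N (x + z) (y + z)"
proof -
  assume "fire_step N x y"
  then obtain u where u: "u \<in> trans N" "preset N u \<subseteq># x" "y = x - preset N u + postset N u"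
    by (auto simp: fire_step_def)
  have "y + z = x + z - preset N u + postset N u"
  proof (rule multiset_eqI)
    fix a
    have "count (preset N u) a \<le> count x a"
      using u(2) by (rule mset_subset_eq_count)
    then show "count (y + z) a = count (x + z - preset N u + postset N u) a"
      by (simp add: u(3))
  qed
  moreover have "preset N u \<subseteq># x + z"
    using u(2) by (simp add: subset_mset.add_increasing2)
  ultimately show ?thesis
    using u(1) unfolding fire_step_def by blast
qed

lemma reach_add: "reach N x y \<Longrightarrow> reach N (x + z) (y + z)"
  unfolding reach_def
  by (induction rule: rtranclp_induct) (auto intro: rtranclp.rtrancl_into_rtrancl fire_step_add)

lemma finite_flow_pre: "petri_net N \<Longrightarrow> finite {y. (y, u) \<in> flow N}"
  and finite_flow_post: "petri_net N \<Longrightarrow> finite {y. (u, y) \<in> flow N}"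
  unfolding petri_net_def by (auto intro: finite_subset[of _ "places N \<union> trans N"])

lemma in_preset_iff: "petri_net N \<Longrightarrow> x \<in># preset N u \<longleftrightarrow> (x, u) \<in> flow N"
  and in_postset_iff: "petri_net N \<Longrightarrow> x \<in># postset N u \<longleftrightarrow> (u, x) \<in> flow N"
  by (simp_all add: preset_def postset_def finite_flow_pre finite_flow_post)

lemma reach_preserves_places:
  assumes "petri_net N" "reach N x y" "set_mset x \<subseteq> places N"
  shows "set_mset y \<subseteq> places N"
  using assms(2,3) unfolding reach_def
proof (induction rule: rtranclp_induct)
  case (step y z)
  then obtain u where u: "u \<in> trans N" "z = y - preset N u + postset N u"
    by (auto simp: fire_step_def)
  have "set_mset (postset N u) \<subseteq> places N"
  proof
    fix p
    assume "p \<in># postset N u"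
    then have "(u, p) \<in> flow N"
      using assms(1) by (simp add: in_postset_iff)
    then show "p \<in> places N"
      using assms(1) u(1) unfolding petri_net_def by blast
  qed
  with step u(2) show ?case
    by (auto dest: in_diffD)
qed simp

lemma reach_sum_mset_image:
  assumes "\<And>u. u \<in> trans A \<Longrightarrow> \<exists>v\<in>trans B.
      preset B v = (\<Sum>p\<in>#preset A u. f p) \<and> postset B v = (\<Sum>p\<in>#postset A u. f p)"
    and "reach A x y"
  shows "reach B (\<Sum>p\<in>#x. f p) (\<Sum>p\<in>#y. f p)"
  using assms(2) unfolding reach_def[of A]
proof (induction rule: rtranclp_induct)
  case (step y z)
  then obtain u where u: "u \<in> trans A" "preset A u \<subseteq># y" "z = y - preset A u + postset A u"
    by (auto simp: fire_step_def)
  then obtain v where v: "v \<in> trans B"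
    "preset B v = (\<Sum>p\<in>#preset A u. f p)" "postset B v = (\<Sum>p\<in>#postset A u. f p)"
    using assms(1) by blast
  define r where "r = y - preset A u"
  have y: "y = preset A u + r" and z: "z = r + postset A u"
    using u(2,3) by (simp_all add: r_def)
  have "reach B (\<Sum>p\<in>#y. f p) (\<Sum>p\<in>#z. f p)"
    using reach_fire[OF v(1), of "(\<Sum>p\<in>#y. f p)"] unfolding v(2,3) y z by simp
  with step.IH show ?case
    by (rule reach_trans)
qed simp

lemma in_repeat_mset_iff: "x \<in># repeat_mset n A \<longleftrightarrow> 0 < n \<and> x \<in># A"
  by (simp flip: count_greater_zero_iff)

lemma replicate_mset_add: "replicate_mset (m + n) a = replicate_mset m a + replicate_mset n a"
  by (simp add: multiset_eq_iff)

lemma filter_mset_eq_self: "(\<And>x. x \<in># A \<Longrightarrow> P x) \<Longrightarrow> filter_mset P A = A"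
  by (simp add: filter_mset_eq_conv)

lemma count_image_mset_Inl [simp]:
  "count (image_mset Inl A) (Inl a) = count A a"
  "count (image_mset Inl A) (Inr b) = 0"
  by (induction A) auto

lemma trans_place_completion [simp]: "trans (place_completion M) = Inl ` trans M"
  and places_place_completion [simp]:
    "places (place_completion M) = Inl ` places M \<union> {Inr False, Inr True}"
  and inp_place_completion [simp]: "inp (place_completion M) = {Inr False}"
  and out_place_completion [simp]: "out (place_completion M) = {Inr True}"
  by (simp_all add: place_completion_def)

lemma petri_net_place_completion: "tWF M \<Longrightarrow> petri_net (place_completion M)"
  by (auto simp: tWF_def petri_net_def place_completion_def)

lemma preset_place_completion:
  assumes "petri_net M"
  shows "preset (place_completion M) (Inl u) =
    image_mset Inl (preset M u) + (if u \<in> inp M then {#Inr False#} else {#})"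
proof -
  have "{y. (y, Inl u) \<in> flow (place_completion M)} =
      Inl ` {y. (y, u) \<in> flow M} \<union> (if u \<in> inp M then {Inr False} else {})"
    by (auto simp: place_completion_def)
  then show ?thesis
    using finite_flow_pre[OF assms, of u]
    by (simp add: preset_def image_mset_mset_set mset_set.insert_remove image_iff)
qed

lemma postset_place_completion:
  assumes "petri_net M"
  shows "postset (place_completion M) (Inl u) =
    image_mset Inl (postset M u) + (if u \<in> out M then {#Inr True#} else {#})"
proof -
  have "{y. (Inl u, y) \<in> flow (place_completion M)} =
      Inl ` {y. (u, y) \<in> flow M} \<union> (if u \<in> out M then {Inr True} else {})"
    by (auto simp: place_completion_def)
  then show ?thesis
    using finite_flow_post[OF assms, of u]
    by (simp add: postset_def image_mset_mset_set mset_set.insert_remove image_iff)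
qed

lemma reach_place_completion_fire:
  assumes "petri_net M" "u \<in> trans M" "preset M u \<subseteq># a"
    and "reach (place_completion M) (replicate_mset i (Inr False))
      (image_mset Inl a + replicate_mset j (Inr True))"
  shows "reach (place_completion M) (replicate_mset (i + of_bool (u \<in> inp M)) (Inr False))
      (image_mset Inl (a - preset M u + postset M u) +
       replicate_mset (j + of_bool (u \<in> out M)) (Inr True))"
proof -
  let ?pc = "place_completion M"
  let ?X = "image_mset Inl a + replicate_mset j (Inr True) +
    replicate_mset (of_bool (u \<in> inp M)) (Inr False)"
  have "reach ?pc (replicate_mset (i + of_bool (u \<in> inp M)) (Inr False)) ?X"
    using reach_add[OF assms(4)] by (simp add: replicate_mset_add)
  also have "reach ?pc ?X (?X - preset ?pc (Inl u) + postset ?pc (Inl u))"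
  proof (rule reach_fire)
    show "Inl u \<in> trans ?pc"
      using assms(2) by simp
    show "preset ?pc (Inl u) \<subseteq># ?X"
    proof (rule mset_subset_eqI)
      fix b
      show "count (preset ?pc (Inl u)) b \<le> count ?X b"
        using mset_subset_eq_count[OF assms(3)]
        by (cases b) (simp_all add: preset_place_completion[OF assms(1)])
    qed
  qed
  also have "?X - preset ?pc (Inl u) + postset ?pc (Inl u) =
      image_mset Inl (a - preset M u + postset M u) +
      replicate_mset (j + of_bool (u \<in> out M)) (Inr True)"
  proof (rule multiset_eqI)
    fix b
    show "count (?X - preset ?pc (Inl u) + postset ?pc (Inl u)) b =
        count (image_mset Inl (a - preset M u + postset M u) +
          replicate_mset (j + of_bool (u \<in> out M)) (Inr True)) b"
      using mset_subset_eq_count[OF assms(3)]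
      by (cases b) (simp_all add: preset_place_completion[OF assms(1)]
          postset_place_completion[OF assms(1)])
  qed
  finally show ?thesis .
qed

lemma reach_place_completion_out_mono:
  assumes "petri_net M" "reach (place_completion M) x y"
  shows "count x (Inr True) \<le> count y (Inr True)"
  using assms(2) unfolding reach_def
proof (induction rule: rtranclp_induct)
  case (step y z)
  then obtain u where
    "z = y - preset (place_completion M) (Inl u) + postset (place_completion M) (Inl u)"
    by (auto simp: fire_step_def)
  with step.IH show ?case
    by (simp add: preset_place_completion[OF assms(1)])
qed simp

lemma tWF_sub_soundD:
  assumes "tWF_sub_sound M" "k' \<le> k" "set_mset m \<subseteq> places (place_completion M)"
    and "reach (place_completion M) (replicate_mset k (Inr False))
      (m + replicate_mset k' (Inr True))"
  shows "reach (place_completion M) m (replicate_mset (k - k') (Inr True))"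
  using assms unfolding tWF_sub_sound_def sub_sound_def by simp

lemma tWF_sub_sound_out_le_in:
  assumes "tWF M" "tWF_sub_sound M"
    and run: "reach (place_completion M) (replicate_mset i (Inr False))
      (m + replicate_mset j (Inr True))"
  shows "j \<le> i"
proof (rule ccontr)
  assume "\<not> j \<le> i"
  then have split: "m + replicate_mset j (Inr True) =
      (m + replicate_mset (j - i) (Inr True)) + replicate_mset i (Inr True)"
    by (simp add: multiset_eq_iff)
  have "set_mset (m + replicate_mset j (Inr True)) \<subseteq> places (place_completion M)"
    using reach_preserves_places[OF petri_net_place_completion[OF assms(1)] run] by auto
  then have "set_mset (m + replicate_mset (j - i) (Inr True)) \<subseteq> places (place_completion M)"
    by auto
  from tWF_sub_soundD[OF assms(2) order_refl this] run
  have "reach (place_completion M) (m + replicate_mset (j - i) (Inr True)) {#}"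
    unfolding split by simp
  then have "count (m + replicate_mset (j - i) (Inr True)) (Inr True) \<le> 0"
    using assms(1) reach_place_completion_out_mono unfolding tWF_def by fastforce
  with \<open>\<not> j \<le> i\<close> show False
    by simp
qed

locale transition_substitution =
  fixes N M :: "'a wfnet" and t :: 'a
  assumes pWF_N: "pWF N" and tWF_M: "tWF M"
    and disjoint: "nodes N \<inter> nodes M = {}" and t_trans: "t \<in> trans N"
begin

abbreviation "S \<equiv> subst_trans N t M"
abbreviation "pc \<equiv> place_completion M"

lemma petri_net_N: "petri_net N" and petri_net_M: "petri_net M"
  using pWF_N tWF_M by (simp_all add: pWF_def tWF_def)

lemma flow_N:
    "(x, y) \<in> flow N \<Longrightarrow> x \<in> nodes N \<and> y \<in> nodes N \<and> (x \<in> trans N \<longleftrightarrow> y \<notin> trans N)"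
  and flow_M:
    "(x, y) \<in> flow M \<Longrightarrow> x \<in> nodes M \<and> y \<in> nodes M \<and> (x \<in> trans M \<longleftrightarrow> y \<notin> trans M)"
  using petri_net_N petri_net_M unfolding petri_net_def nodes_def by blast+

lemma inp_M_nodes: "inp M \<subseteq> nodes M" and out_M_nodes: "out M \<subseteq> nodes M"
  using tWF_M by (auto simp: tWF_def nodes_def)

lemma places_subst: "places S = places N \<union> places M"
  and trans_subst: "trans S = (trans N - {t}) \<union> trans M"
  and inp_subst: "inp S = inp N"
  and out_subst: "out S = out N"
  using pWF_N t_trans by (auto simp: subst_trans_def pWF_def petri_net_def)

lemma flow_subst_N:
  assumes "u \<noteq> t" "u \<in> trans N"
  shows "(x, u) \<in> flow S \<longleftrightarrow> (x, u) \<in> flow N" and "(u, x) \<in> flow S \<longleftrightarrow> (u, x) \<in> flow N"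
  using assms disjoint flow_N flow_M inp_M_nodes out_M_nodes t_trans
  by (auto simp: subst_trans_def nodes_def) blast+

lemma preset_subst_N: "u \<noteq> t \<Longrightarrow> u \<in> trans N \<Longrightarrow> preset S u = preset N u"
  and postset_subst_N: "u \<noteq> t \<Longrightarrow> u \<in> trans N \<Longrightarrow> postset S u = postset N u"
  by (simp_all add: preset_def postset_def flow_subst_N)

lemma preset_subst_M:
  assumes "u \<in> nodes M"
  shows "preset S u = preset M u + (if u \<in> inp M then preset N t else {#})"
proof -
  have "{y. (y, u) \<in> flow S} =
      {y. (y, u) \<in> flow M} \<union> (if u \<in> inp M then {y. (y, t) \<in> flow N} else {})"
    using assms disjoint flow_N t_trans by (auto simp: subst_trans_def nodes_def)
  moreover have "{y. (y, u) \<in> flow M} \<inter> {y. (y, t) \<in> flow N} = {}"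
    using disjoint flow_N flow_M by blast
  ultimately show ?thesis
    unfolding preset_def
    using finite_flow_pre[OF petri_net_M] finite_flow_pre[OF petri_net_N]
    by (simp add: mset_set_Union)
qed

lemma postset_subst_M:
  assumes "u \<in> nodes M"
  shows "postset S u = postset M u + (if u \<in> out M then postset N t else {#})"
proof -
  have "{y. (u, y) \<in> flow S} =
      {y. (u, y) \<in> flow M} \<union> (if u \<in> out M then {y. (t, y) \<in> flow N} else {})"
    using assms disjoint flow_N t_trans by (auto simp: subst_trans_def nodes_def)
  moreover have "{y. (u, y) \<in> flow M} \<inter> {y. (t, y) \<in> flow N} = {}"
    using disjoint flow_N flow_M by blast
  ultimately show ?thesis
    unfolding postset_def
    using finite_flow_post[OF petri_net_M] finite_flow_post[OF petri_net_N]
    by (simp add: mset_set_Union)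
qed

text \<open>A marking of the place completion of M is read as a marking of the substituted net
  by replacing p_i with the preset and p_o with the postset of t.\<close>

definition flatten :: "('a + bool) multiset \<Rightarrow> 'a multiset" where
  "flatten x = (\<Sum>p\<in>#x. case p of Inl a \<Rightarrow> {#a#} | Inr b \<Rightarrow> if b then postset N t else preset N t)"

lemma flatten_empty [simp]: "flatten {#} = {#}"
  and flatten_add [simp]: "flatten (x + y) = flatten x + flatten y"
  and flatten_Inl [simp]: "flatten (image_mset Inl m) = m"
  and flatten_in [simp]: "flatten {#Inr False#} = preset N t"
  and flatten_out [simp]: "flatten {#Inr True#} = postset N t"
  by (simp_all add: flatten_def image_mset.compositionality o_def)

lemma flatten_replicate_out [simp]:
  "flatten (replicate_mset n (Inr True)) = repeat_mset n (postset N t)"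
  by (induction n) (simp_all add: flatten_def)

lemma reach_subst_flatten:
  assumes "reach pc x y"
  shows "reach S (flatten x) (flatten y)"
proof -
  have "\<exists>u\<in>trans S. preset S u = flatten (preset pc v) \<and> postset S u = flatten (postset pc v)"
    if v: "v \<in> trans pc" for v
  proof -
    obtain u where u: "u \<in> trans M" "v = Inl u"
      using v by auto
    then have "u \<in> trans S" "u \<in> nodes M"
      by (simp_all add: trans_subst nodes_def)
    moreover have "preset S u = flatten (preset pc v)" "postset S u = flatten (postset pc v)"
      using \<open>u \<in> nodes M\<close>
      by (simp_all add: u(2) preset_subst_M postset_subst_M preset_place_completion[OF petri_net_M]
          postset_place_completion[OF petri_net_M])
    ultimately show ?thesis
      by blast
  qed
  then show ?thesis
    unfolding flatten_def by (rule reach_sum_mset_image[OF _ assms])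
qed

definition N_part :: "'a multiset \<Rightarrow> 'a multiset" where
  "N_part m = filter_mset (\<lambda>x. x \<in> nodes N) m"

definition M_part :: "'a multiset \<Rightarrow> 'a multiset" where
  "M_part m = filter_mset (\<lambda>x. x \<notin> nodes N) m"

lemma N_part_empty [simp]: "N_part {#} = {#}"
  and M_part_empty [simp]: "M_part {#} = {#}"
  and N_part_add [simp]: "N_part (x + y) = N_part x + N_part y"
  and N_part_diff [simp]: "N_part (x - y) = N_part x - N_part y"
  and M_part_add [simp]: "M_part (x + y) = M_part x + M_part y"
  and M_part_diff [simp]: "M_part (x - y) = M_part x - M_part y"
  by (simp_all add: N_part_def M_part_def)

lemma N_part_mono: "x \<subseteq># y \<Longrightarrow> N_part x \<subseteq># N_part y"
  and M_part_mono: "x \<subseteq># y \<Longrightarrow> M_part x \<subseteq># M_part y"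
  by (simp_all add: N_part_def M_part_def multiset_filter_mono)

lemma N_part_add_M_part: "N_part m + M_part m = m"
  by (simp add: N_part_def M_part_def flip: multiset_partition)

lemma parts_of_N_marking: "set_mset m \<subseteq> nodes N \<Longrightarrow> N_part m = m \<and> M_part m = {#}"
  by (auto simp: N_part_def M_part_def intro!: filter_mset_eq_self)

lemma parts_of_M_marking: "set_mset m \<subseteq> nodes M \<Longrightarrow> N_part m = {#} \<and> M_part m = m"
  using disjoint by (auto simp: N_part_def M_part_def intro!: filter_mset_eq_self)

lemma set_preset_N: "set_mset (preset N u) \<subseteq> nodes N"
  and set_postset_N: "set_mset (postset N u) \<subseteq> nodes N"
  and set_preset_M: "set_mset (preset M u) \<subseteq> nodes M"
  and set_postset_M: "set_mset (postset M u) \<subseteq> nodes M"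
  using flow_N flow_M by (auto simp: in_preset_iff in_postset_iff petri_net_N petri_net_M)

lemma set_N_part: "set_mset m \<subseteq> places S \<Longrightarrow> set_mset (N_part m) \<subseteq> places N"
  and set_M_part: "set_mset m \<subseteq> places S \<Longrightarrow> set_mset (M_part m) \<subseteq> places M"
proof -
  assume m: "set_mset m \<subseteq> places S"
  have "places M \<inter> nodes N = {}" "places N \<subseteq> nodes N"
    using disjoint by (auto simp: nodes_def)
  with m show "set_mset (N_part m) \<subseteq> places N" "set_mset (M_part m) \<subseteq> places M"
    unfolding N_part_def M_part_def places_subst set_mset_filter by blast+
qed

lemma set_postset_t: "set_mset (postset N t) \<subseteq> places N"
  using petri_net_N t_trans unfolding petri_net_def by (auto simp: in_postset_iff petri_net_N)

lemma parts_preset_subst_M: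
  assumes "u \<in> nodes M"
  shows "N_part (preset S u) = (if u \<in> inp M then preset N t else {#})"
    and "M_part (preset S u) = preset M u"
  using parts_of_N_marking[OF set_preset_N] parts_of_M_marking[OF set_preset_M]
  by (simp_all add: preset_subst_M[OF assms])

lemma parts_postset_subst_M:
  assumes "u \<in> nodes M"
  shows "N_part (postset S u) = (if u \<in> out M then postset N t else {#})"
    and "M_part (postset S u) = postset M u"
  using parts_of_N_marking[OF set_postset_N] parts_of_M_marking[OF set_postset_M]
  by (simp_all add: postset_subst_M[OF assms])

text \<open>The place completion has started d + j instances of M and finished j of them; the
  N-run has fired t once per started instance and reaches the N-part of m together with the
  t\<bullet> still owed by the d pending instances.\<close>

definition decomposition :: "'a multiset \<Rightarrow> 'a multiset \<Rightarrow> nat \<Rightarrow> nat \<Rightarrow> bool" where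
  "decomposition m\<^sub>0 m d j \<longleftrightarrow>
     reach pc (replicate_mset (d + j) (Inr False))
       (image_mset Inl (M_part m) + replicate_mset j (Inr True)) \<and>
     reach N m\<^sub>0 (N_part m + repeat_mset d (postset N t))"

context
  assumes sound_M: "tWF_sub_sound M"
begin

lemma reach_subst_t: "reach S (m + preset N t) (m + postset N t)"
proof -
  have "reach pc {#Inr False#} (replicate_mset (1 - 0) (Inr True))"
    by (rule tWF_sub_soundD[OF sound_M]) simp_all
  then have "reach S (preset N t) (postset N t)"
    using reach_subst_flatten by fastforce
  then show ?thesis
    using reach_add by (metis add.commute)
qed

lemma reach_subst_if_reach_N: "reach N x y \<Longrightarrow> reach S x y"
  unfolding reach_def[of N]
proof (induction rule: rtranclp_induct)
  case (step y z)
  then obtain u where u: "u \<in> trans N" "preset N u \<subseteq># y" "z = y - preset N u + postset N u"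
    by (auto simp: fire_step_def)
  have "reach S y z"
  proof (cases "u = t")
    case True
    then show ?thesis
      using reach_subst_t[of "y - preset N t"] u(2,3) by simp
  next
    case False
    then show ?thesis
      using reach_fire[of u S y] u by (simp add: trans_subst preset_subst_N postset_subst_N)
  qed
  with step.IH show ?case
    by (rule reach_trans)
qed simp

lemma decomposition_fire_N:
  assumes "u \<in> trans N" "u \<noteq> t" "preset S u \<subseteq># m" "decomposition m\<^sub>0 m d j"
  shows "decomposition m\<^sub>0 (m - preset S u + postset S u) d j"
proof -
  note parts = parts_of_N_marking[OF set_preset_N] parts_of_N_marking[OF set_postset_N]
  have "N_part (preset S u) \<subseteq># N_part m"
    using assms(3) by (rule N_part_mono)
  then have pre: "preset N u \<subseteq># N_part m"
    using parts by (simp add: preset_subst_N[OF assms(2,1)])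
  have "M_part (m - preset S u + postset S u) = M_part m"
    "N_part (m - preset S u + postset S u) = N_part m - preset N u + postset N u"
    using parts by (simp_all add: preset_subst_N[OF assms(2,1)]
        postset_subst_N[OF assms(2,1)])
  moreover have "reach N (N_part m + repeat_mset d (postset N t))
      (N_part m - preset N u + postset N u + repeat_mset d (postset N t))"
    using reach_add[OF reach_fire[OF assms(1) pre]] .
  ultimately show ?thesis
    using assms(4) unfolding decomposition_def by (auto intro: reach_trans)
qed

lemma decomposition_fire_M:
  assumes "u \<in> trans M" "preset S u \<subseteq># m" "decomposition m\<^sub>0 m d j"
  shows "\<exists>d' j'. decomposition m\<^sub>0 (m - preset S u + postset S u) d' j'"
proof -
  let ?i = "of_bool (u \<in> inp M) :: nat" and ?o = "of_bool (u \<in> out M) :: nat"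
  let ?pt = "preset N t" and ?qt = "postset N t"
  have u: "u \<in> nodes M"
    using assms(1) by (simp add: nodes_def)
  have pre_N: "repeat_mset ?i ?pt \<subseteq># N_part m" and pre_M: "preset M u \<subseteq># M_part m"
    using N_part_mono[OF assms(2)] M_part_mono[OF assms(2)]
    by (simp_all add: parts_preset_subst_M[OF u] split: if_split_asm)
  have parts:
    "N_part (m - preset S u + postset S u) = N_part m - repeat_mset ?i ?pt + repeat_mset ?o ?qt"
    "M_part (m - preset S u + postset S u) = M_part m - preset M u + postset M u"
    by (simp_all add: parts_preset_subst_M[OF u] parts_postset_subst_M[OF u])
  have pc_run: "reach pc (replicate_mset (d + j + ?i) (Inr False))
      (image_mset Inl (M_part m - preset M u + postset M u) + replicate_mset (j + ?o) (Inr True))"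
    using reach_place_completion_fire[OF petri_net_M assms(1) pre_M] assms(3)
    by (simp add: decomposition_def)
  \<comment> \<open>an instance of M can only finish once it has started, so d + ?i - ?o does not truncate\<close>
  then have "?o \<le> d + ?i"
    using tWF_sub_sound_out_le_in[OF tWF_M sound_M] by fastforce
  have "reach N m\<^sub>0 (N_part m + repeat_mset d ?qt)"
    using assms(3) by (simp add: decomposition_def)
  also have "reach N (N_part m + repeat_mset d ?qt)
      (N_part m - repeat_mset ?i ?pt + repeat_mset ?i ?qt + repeat_mset d ?qt)"
    using reach_add[OF reach_fire_repeat[OF t_trans pre_N]] .
  also have "\<dots> = N_part m - repeat_mset ?i ?pt + repeat_mset ?o ?qt + repeat_mset (d + ?i - ?o) ?qt"
    using \<open>?o \<le> d + ?i\<close> by (simp add: repeat_mset_distrib[symmetric])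
  finally have "decomposition m\<^sub>0 (m - preset S u + postset S u) (d + ?i - ?o) (j + ?o)"
    using pc_run \<open>?o \<le> d + ?i\<close> unfolding decomposition_def parts by (simp add: ac_simps)
  then show ?thesis
    by blast
qed

lemma reach_subst_decomposition:
  assumes "reach S m\<^sub>0 m" "set_mset m\<^sub>0 \<subseteq> nodes N"
  shows "\<exists>d j. decomposition m\<^sub>0 m d j"
  using assms(1) unfolding reach_def
proof (induction rule: rtranclp_induct)
  case base
  have "decomposition m\<^sub>0 m\<^sub>0 0 0"
    using parts_of_N_marking[OF assms(2)] by (simp add: decomposition_def)
  then show ?case
    by blast
next
  case (step m m')
  obtain d j where dec: "decomposition m\<^sub>0 m d j"
    using step.IH by blast
  obtain u where u: "u \<in> trans S" "preset S u \<subseteq># m" "m' = m - preset S u + postset S u"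
    using step.hyps(2) unfolding fire_step_def by blast
  show ?case
  proof (cases "u \<in> trans M")
    case True
    then show ?thesis
      using decomposition_fire_M[OF _ u(2) dec] u(3) by blast
  next
    case False
    then have "u \<in> trans N" "u \<noteq> t"
      using u(1) by (simp_all add: trans_subst)
    then show ?thesis
      using decomposition_fire_N[OF _ _ u(2) dec] u(3) by blast
  qed
qed

lemma reach_subst_complete_M_part:
  assumes "reach pc (replicate_mset (d + j) (Inr False))
      (image_mset Inl (M_part m) + replicate_mset j (Inr True))"
    and "set_mset m \<subseteq> places S"
  shows "reach S m (N_part m + repeat_mset d (postset N t))"
proof -
  have "set_mset (image_mset Inl (M_part m)) \<subseteq> places pc"
    using set_M_part[OF assms(2)] by auto
  from tWF_sub_soundD[OF sound_M le_add2 this] assms(1)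
  have "reach pc (image_mset Inl (M_part m)) (replicate_mset d (Inr True))"
    by simp
  from reach_subst_flatten[OF this]
  have "reach S (M_part m) (repeat_mset d (postset N t))"
    by simp
  from reach_add[OF this, of "N_part m"] show ?thesis
    by (metis add.commute N_part_add_M_part)
qed

lemma sub_sound_subst:
  assumes "sub_sound N"
  shows "sub_sound S"
  unfolding sub_sound_def inp_subst out_subst
proof (intro allI impI)
  fix k k' :: nat and m
  let ?I = "repeat_mset k (mset_set (inp N))" and ?O = "repeat_mset k' (mset_set (out N))"
  assume "k' \<le> k" "set_mset m \<subseteq> places S" and run: "reach S ?I (m + ?O)"
  have "set_mset ?I \<subseteq> nodes N" "set_mset ?O \<subseteq> nodes N"
    using pWF_N finite_subset[of "inp N" "places N"] finite_subset[of "out N" "places N"]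
    by (auto simp: pWF_def petri_net_def nodes_def in_repeat_mset_iff)
  then obtain d j where "decomposition ?I (m + ?O) d j"
    using reach_subst_decomposition[OF run] by blast
  then have pc_run: "reach pc (replicate_mset (d + j) (Inr False))
        (image_mset Inl (M_part m) + replicate_mset j (Inr True))"
    and N_run: "reach N ?I (N_part m + repeat_mset d (postset N t) + ?O)"
    using parts_of_N_marking[OF \<open>set_mset ?O \<subseteq> nodes N\<close>]
    by (simp_all add: decomposition_def ac_simps)
  have "set_mset (N_part m + repeat_mset d (postset N t)) \<subseteq> places N"
    using set_N_part[OF \<open>set_mset m \<subseteq> places S\<close>] set_postset_t
    by (auto simp: in_repeat_mset_iff)
  with N_run have "reach N (N_part m + repeat_mset d (postset N t))
      (repeat_mset (k - k') (mset_set (out N)))"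
    using assms \<open>k' \<le> k\<close> unfolding sub_sound_def by blast
  then show "reach S m (repeat_mset (k - k') (mset_set (out N)))"
    using reach_trans[OF reach_subst_complete_M_part[OF pc_run \<open>set_mset m \<subseteq> places S\<close>]]
      reach_subst_if_reach_N by blast
qed

end

end

theorem mainTheorem13:
  fixes N M :: "'a wfnet" and t :: 'a
  assumes "pWF N" and "sub_sound N"
    and "tWF M" and "tWF_sub_sound M"
    and "nodes N \<inter> nodes M = {}"
    and "t \<in> trans N"
  shows "sub_sound (subst_trans N t M)"
proof -
  interpret transition_substitution N M t
    using assms by unfold_locales
  show ?thesis
    using sub_sound_subst assms by blast
qed

end
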